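(* Let $N, K \geq 2$ be integers, let $N_0>0$, $P>0$, $T>0$, fix $i\in\{1,\ldots,K\}$ and let $\mathbf{s}_k\in\mathbb{C}^N$ for $k\neq i$ be given. For $m=1,\ldots,N$ define $$\lambda^{(i)}_m = \sqrt{1+\tfrac12\cos(2\pi \tfrac mN)}\sum_{k=1,k\neq i}^K (\mathbf{s}_k^* Q_m \mathbf{s}_k),\qquad \hat\lambda^{(i)}_m = \sqrt{1+\tfrac12\cos(2\pi(\tfrac mN + \tfrac1{2N}))}\sum_{k=1,k\neq i}^K (\mathbf{s}_k^* \hat Q_m \mathbf{s}_k).$$ Let $\lambda^{(i)}_{\min}$ be the minimum eigenvalue of $\Sigma_i = \sum_{k\neq i}\sum_{m=1}^N[(\mathbf{s}_k^*Q_m\mathbf{s}_k)Q_m + (\mathbf{s}_k^*\hat Q_m\mathbf{s}_k)\hat Q_m]$, and let $$\operatorname{SINR}^\star_i = \max_{\mathbf{s}_i\in\mathbb{C}^N,\ \|\mathbf{s}_i\|^2=N} \left\{ \frac{1}{6N^2}\sum_{k=1, k\neq i}^K \sum_{m=1}^N S_m^{i,k} + \frac{N_0}{2PT}\right\}^{-1/2}.$$ Then $$\min_m \lambda^{(i)}_m + \min_m \hat\lambda^{(i)}_m \le \lambda^{(i)}_{\min} \le \gamma := \min\left\{\min_m \lambda^{(i)}_m + \max_m \hat\lambda^{(i)}_m,\ \max_m\lambda^{(i)}_m + \min_m\hat\lambda^{(i)}_m\right\},$$ and consequently $$\left\{\frac{\gamma}{6N} + \frac{N_0}{2PT}\right\}^{-1/2}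 \le \operatorname{SINR}^\star_i \le \left\{\frac{1}{6N}\left(\min_m \lambda^{(i)}_m + \min_m\hat\lambda^{(i)}_m\right) + \frac{N_0}{2PT}\right\}^{-1/2}.$$
   Context: Indices run over $1,\ldots,N$; $j$ is the imaginary unit and $\mathbf{z}^*$ denotes conjugate transpose. $V$ and $\hat V$ are the $N\times N$ unitary matrices with entries $V_{m,n} = \frac{1}{\sqrt N}\exp(-2\pi j \frac{mn}{N})$ and $\hat V_{m,n} = \frac{1}{\sqrt N}\exp\!\left(-2\pi j n(\frac{m}{N} + \frac{1}{2N})\right)$. For $m=1,\ldots,N$, $C_m$ (resp. $\hat C_m$) is the $N\times N$ diagonal matrix whose only nonzero entry is the $(m,m)$ entry, equal to $\sqrt{1+\frac12\cos(2\pi \frac mN)}$ (resp. $\sqrt{1+\frac12\cos(2\pi(\frac mN+\frac1{2N}))}$). Set $Q_m = V^* C_m V$ and $\hat Q_m = \hat V^* \hat C_m \hat V$. For $\mathbf{s}_i,\mathbf{s}_k\in\mathbb{C}^N$, $S_m^{i,k} = (\mathbf{s}_i^* Q_m \mathbf{s}_i)(\mathbf{s}_k^* Q_m \mathbf{s}_k) + (\mathbf{s}_i^* \hat Q_m \mathbf{s}_i)(\mathbf{s}_k^* \hat Q_m \mathbf{s}_k)$. *)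

theory Defs
  imports "Jordan_Normal_Form.Schur_Decomposition"
begin

text \<open>Matrices are N x N Jordan_Normal_Form matrices; the paper's 1-based index m (row)
  and n (column) correspond to the 0-based JNF indices m-1 and n-1.\<close>

definition Vmat :: "nat \<Rightarrow> complex mat" where
  "Vmat N = mat N N (\<lambda>(a, b). let m = real (a + 1); n = real (b + 1) in
      exp (- 2 * pi * \<i> * complex_of_real (m * n / real N)) / complex_of_real (sqrt (real N)))"

definition Vhat :: "nat \<Rightarrow> complex mat" where
  "Vhat N = mat N N (\<lambda>(a, b). let m = real (a + 1); n = real (b + 1) in
      exp (- 2 * pi * \<i> * complex_of_real (n * (m / real N + 1 / (2 * real N))))
        / complex_of_real (sqrt (real N)))"

definition cval :: "nat \<Rightarrow> nat \<Rightarrow> real" where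
  "cval N m = sqrt (1 + 1/2 * cos (2 * pi * (real m / real N)))"

definition chat :: "nat \<Rightarrow> nat \<Rightarrow> real" where
  "chat N m = sqrt (1 + 1/2 * cos (2 * pi * (real m / real N + 1 / (2 * real N))))"

definition Cmat :: "nat \<Rightarrow> nat \<Rightarrow> complex mat" where
  "Cmat N m = mat N N (\<lambda>(a, b). if a = b \<and> a + 1 = m then complex_of_real (cval N m) else 0)"

definition Chatmat :: "nat \<Rightarrow> nat \<Rightarrow> complex mat" where
  "Chatmat N m = mat N N (\<lambda>(a, b). if a = b \<and> a + 1 = m then complex_of_real (chat N m) else 0)"

definition Qmat :: "nat \<Rightarrow> nat \<Rightarrow> complex mat" where
  "Qmat N m = mat_adjoint (Vmat N) * Cmat N m * Vmat N"

definition Qhat :: "nat \<Rightarrow> nat \<Rightarrow> complex mat" where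
  "Qhat N m = mat_adjoint (Vhat N) * Chatmat N m * Vhat N"

definition qf :: "complex mat \<Rightarrow> complex vec \<Rightarrow> complex" where
  "qf A z = conjugate z \<bullet> (A *\<^sub>v z)"

text \<open>S_m^{i,k}.  Both factors are real (Q_m is Hermitian), so we take the real part.\<close>
definition Sm :: "nat \<Rightarrow> nat \<Rightarrow> complex vec \<Rightarrow> complex vec \<Rightarrow> real" where
  "Sm N m si sk = Re (qf (Qmat N m) si * qf (Qmat N m) sk + qf (Qhat N m) si * qf (Qhat N m) sk)"

definition lam :: "nat \<Rightarrow> nat \<Rightarrow> nat \<Rightarrow> (nat \<Rightarrow> complex vec) \<Rightarrow> nat \<Rightarrow> real" where
  "lam N K i s m = cval N m * (\<Sum>k\<in>{1..K} - {i}. Re (qf (Qmat N m) (s k)))"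

definition lamhat :: "nat \<Rightarrow> nat \<Rightarrow> nat \<Rightarrow> (nat \<Rightarrow> complex vec) \<Rightarrow> nat \<Rightarrow> real" where
  "lamhat N K i s m = chat N m * (\<Sum>k\<in>{1..K} - {i}. Re (qf (Qhat N m) (s k)))"

definition Sigma_i :: "nat \<Rightarrow> nat \<Rightarrow> nat \<Rightarrow> (nat \<Rightarrow> complex vec) \<Rightarrow> complex mat" where
  "Sigma_i N K i s = mat N N (\<lambda>(a, b). \<Sum>k\<in>{1..K} - {i}. \<Sum>m\<in>{1..N}.
      qf (Qmat N m) (s k) * Qmat N m $$ (a, b) + qf (Qhat N m) (s k) * Qhat N m $$ (a, b))"

text \<open>Minimum eigenvalue of a Hermitian matrix (its eigenvalues are real).\<close>
definition min_eig :: "complex mat \<Rightarrow> real" where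
  "min_eig A = Min {x :: real. eigenvalue A (complex_of_real x)}"

definition SINR_star :: "nat \<Rightarrow> nat \<Rightarrow> nat \<Rightarrow> (nat \<Rightarrow> complex vec) \<Rightarrow> real \<Rightarrow> real \<Rightarrow> real \<Rightarrow> real" where
  "SINR_star N K i s N0 P T =
     (SUP si \<in> {si \<in> carrier_vec N. (\<Sum>j<N. (cmod (si $ j))\<^sup>2) = real N}.
        (1 / (6 * real N ^ 2) * (\<Sum>k\<in>{1..K} - {i}. \<Sum>m\<in>{1..N}. Sm N m si (s k))
          + N0 / (2 * P * T)) powr (-1/2))"

end

theory Submission
  imports Defs "Jordan_Normal_Form.Spectral_Radius" "HOL-Analysis.Convex"
begin

(* Let v_m be the m-th row of V and c_m the nonzero entry of C_m. Then Q_m = c_m v_m^* v_m, so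
   s^* Q_m s = c_m |(V s)_m|^2, and likewise for the hatted quantities. Hence

     x^* Sigma_i x = sum_m (lambda_m |(V x)_m|^2 + lambda-hat_m |(V-hat x)_m|^2),

   which is also the double sum of the S_m^{i,k} with s_i = x. As V and V-hat are unitary, this
   form is at least (min lambda + min lambda-hat) |x|^2, while the test vector x = sqrt N V^* e_m
   (resp. sqrt N V-hat^* e_m), of squared norm N, gives at most N (lambda_m + max lambda-hat)
   (resp. N (max lambda + lambda-hat_m)). The smallest eigenvalue of the Hermitian matrix Sigma_i
   is bounded by the same quantities: it is at most every Rayleigh quotient, and, evaluated at an
   eigenvector, at least every uniform lower bound on them. The SINR bounds then follow because
   t |-> (t + N0 / (2 P T)) powr (-1/2) is decreasing. *)

(* HOL-Analysis is imported for Cauchy_Schwarz_ineq_sum; its infix inner product would clash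
   with the scalar product of JNF. *)
unbundle no inner_syntax

section \<open>Hermitian matrices and quadratic forms\<close>

definition hermitian_mat :: "nat \<Rightarrow> complex mat \<Rightarrow> bool" where
  "hermitian_mat n A \<longleftrightarrow> A \<in> carrier_mat n n \<and> mat_adjoint A = A"

definition vec_norm_sq :: "complex vec \<Rightarrow> real" where
  "vec_norm_sq x = (\<Sum>a<dim_vec x. (cmod (x $ a))\<^sup>2)"

lemma mat_adjoint_dim [simp]:
  "dim_row (mat_adjoint A) = dim_col A" "dim_col (mat_adjoint A) = dim_row A"
  unfolding mat_adjoint_def by auto

lemma mat_adjoint_carrier [simp]: "A \<in> carrier_mat m n \<Longrightarrow> mat_adjoint A \<in> carrier_mat n m"
  by auto

lemma mat_adjoint_index [simp]:
  "a < dim_col A \<Longrightarrow> b < dim_row A \<Longrightarrow> mat_adjoint A $$ (a, b) = cnj (A $$ (b, a))"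
  unfolding mat_adjoint_def by (simp add: mat_of_rows_index)

lemma mat_adjoint_adjoint [simp]:
  fixes A :: "complex mat"
  shows "mat_adjoint (mat_adjoint A) = A"
  by (rule eq_matI) auto

lemma mat_adjoint_mult:
  fixes A B :: "complex mat"
  assumes "A \<in> carrier_mat m n" and "B \<in> carrier_mat n p"
  shows "mat_adjoint (A * B) = mat_adjoint B * mat_adjoint A"
  using assms by (intro eq_matI) (auto simp: scalar_prod_def mult.commute intro!: sum.cong)

lemma hermitian_mat_iff:
  "hermitian_mat n A \<longleftrightarrow> A \<in> carrier_mat n n \<and> (\<forall>a<n. \<forall>b<n. A $$ (a, b) = cnj (A $$ (b, a)))"
proof (cases "A \<in> carrier_mat n n")
  case True
  have entry: "mat_adjoint A $$ (a, b) = cnj (A $$ (b, a))" if "a < n" "b < n" for a b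
    using True that by simp
  have "mat_adjoint A = A \<longleftrightarrow> (\<forall>a<n. \<forall>b<n. A $$ (a, b) = cnj (A $$ (b, a)))"
  proof
    assume "mat_adjoint A = A"
    then show "\<forall>a<n. \<forall>b<n. A $$ (a, b) = cnj (A $$ (b, a))" using entry by metis
  next
    assume h: "\<forall>a<n. \<forall>b<n. A $$ (a, b) = cnj (A $$ (b, a))"
    show "mat_adjoint A = A"
    proof (rule eq_matI)
      fix a b assume "a < dim_row A" "b < dim_col A"
      then have "a < n" "b < n" using True by auto
      then show "mat_adjoint A $$ (a, b) = A $$ (a, b)" using entry h by metis
    qed (use True in auto)
  qed
  then show ?thesis unfolding hermitian_mat_def using True by blast
qed (simp add: hermitian_mat_def)

lemma hermitian_mat_index:
  assumes "hermitian_mat n A" and "a < n" and "b < n"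
  shows "cnj (A $$ (b, a)) = A $$ (a, b)"
proof -
  have "A $$ (a, b) = cnj (A $$ (b, a))" using assms unfolding hermitian_mat_iff by blast
  then show ?thesis by (rule sym)
qed

lemma hermitian_adjoint_congruence:
  assumes "W \<in> carrier_mat n n" and "hermitian_mat n D"
  shows "hermitian_mat n (mat_adjoint W * D * W)"
  using assms
  by (simp add: hermitian_mat_def mat_adjoint_mult[of _ n n _ n] mult_carrier_mat[of _ n n _ n]
      assoc_mult_mat[of _ n n _ n _ n])

lemma scalar_prod_conjugate_self:
  assumes "x \<in> carrier_vec n"
  shows "conjugate x \<bullet> x = complex_of_real (vec_norm_sq x)"
  using assms unfolding vec_norm_sq_def scalar_prod_def of_real_sum
  by (intro sum.cong) (auto simp: complex_norm_square mult.commute simp del: of_real_power)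

lemma vec_norm_sq_nonneg: "0 \<le> vec_norm_sq x"
  unfolding vec_norm_sq_def by (simp add: sum_nonneg)

lemma vec_norm_sq_pos:
  assumes "x \<in> carrier_vec n" and "x \<noteq> 0\<^sub>v n"
  shows "0 < vec_norm_sq x"
proof -
  obtain a where a: "a < n" "x $ a \<noteq> 0"
  proof (rule ccontr)
    assume "\<not> thesis"
    with that have "x = 0\<^sub>v n" using assms(1) by (intro eq_vecI) auto
    with assms(2) show False by simp
  qed
  have "(cmod (x $ a))\<^sup>2 \<le> vec_norm_sq x"
    unfolding vec_norm_sq_def using a assms by (intro member_le_sum) auto
  moreover have "0 < (cmod (x $ a))\<^sup>2" using a by simp
  ultimately show ?thesis by linarith
qed

lemma adjoint_scalar_prod:
  fixes W :: "complex mat"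
  assumes "W \<in> carrier_mat m n" and "x \<in> carrier_vec n" and "y \<in> carrier_vec m"
  shows "conjugate (W *\<^sub>v x) \<bullet> y = conjugate x \<bullet> (mat_adjoint W *\<^sub>v y)"
proof -
  have "conjugate (W *\<^sub>v x) \<bullet> y = (\<Sum>a<m. \<Sum>b<n. cnj (W $$ (a, b)) * cnj (x $ b) * y $ a)"
    using assms by (auto simp: scalar_prod_def sum_distrib_right atLeast0LessThan intro!: sum.cong)
  also have "\<dots> = (\<Sum>b<n. \<Sum>a<m. cnj (x $ b) * (cnj (W $$ (a, b)) * y $ a))"
    by (subst sum.swap) (simp add: ac_simps)
  also have "\<dots> = conjugate x \<bullet> (mat_adjoint W *\<^sub>v y)"
    using assms by (auto simp: scalar_prod_def sum_distrib_left atLeast0LessThan intro!: sum.cong)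
  finally show ?thesis .
qed

lemma qf_expand:
  fixes A :: "complex mat"
  assumes "A \<in> carrier_mat n n" and "x \<in> carrier_vec n"
  shows "qf A x = (\<Sum>a<n. \<Sum>b<n. cnj (x $ a) * A $$ (a, b) * x $ b)"
  using assms unfolding qf_def
  by (auto simp: scalar_prod_def sum_distrib_left atLeast0LessThan mult.assoc intro!: sum.cong)

lemma qf_adjoint_mult:
  fixes W D :: "complex mat"
  assumes "W \<in> carrier_mat n n" and "D \<in> carrier_mat n n" and "x \<in> carrier_vec n"
  shows "qf (mat_adjoint W * D * W) x = qf D (W *\<^sub>v x)"
proof -
  have "mat_adjoint W * D * W *\<^sub>v x = mat_adjoint W *\<^sub>v (D *\<^sub>v (W *\<^sub>v x))"
  proof -
    have "mat_adjoint W * D \<in> carrier_mat n n" using assms by (intro mult_carrier_mat) auto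
    then show ?thesis
      using assms by (simp add: assoc_mult_mat_vec[of _ n n _ n])
  qed
  then show ?thesis
    using assms unfolding qf_def by (simp add: adjoint_scalar_prod)
qed

lemma qf_mat_sum:
  assumes "finite J" and "x \<in> carrier_vec n"
  shows "qf (mat n n (\<lambda>(a, b). \<Sum>j\<in>J. f j a b)) x = (\<Sum>j\<in>J. qf (mat n n (\<lambda>(a, b). f j a b)) x)"
proof -
  have "qf (mat n n (\<lambda>(a, b). \<Sum>j\<in>J. f j a b)) x
      = (\<Sum>a<n. \<Sum>b<n. \<Sum>j\<in>J. cnj (x $ a) * f j a b * x $ b)"
    using assms(2) by (simp add: qf_expand[of _ n] sum_distrib_left sum_distrib_right)
  also have "\<dots> = (\<Sum>j\<in>J. \<Sum>a<n. \<Sum>b<n. cnj (x $ a) * f j a b * x $ b)"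
    by (simp add: sum.swap[where B = J])
  also have "\<dots> = (\<Sum>j\<in>J. qf (mat n n (\<lambda>(a, b). f j a b)) x)"
    using assms(2) by (simp add: qf_expand[of _ n])
  finally show ?thesis .
qed

lemma qf_mat_lincomb:
  fixes A B :: "complex mat"
  assumes "A \<in> carrier_mat n n" and "B \<in> carrier_mat n n" and "x \<in> carrier_vec n"
  shows "qf (mat n n (\<lambda>(a, b). \<alpha> * A $$ (a, b) + \<beta> * B $$ (a, b))) x = \<alpha> * qf A x + \<beta> * qf B x"
  using assms
  by (simp add: qf_expand[of _ n] sum_distrib_left sum.distrib algebra_simps)

lemma qf_eigenvector:
  fixes A :: "complex mat"
  assumes "A \<in> carrier_mat n n" and "v \<in> carrier_vec n" and "A *\<^sub>v v = e \<cdot>\<^sub>v v"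
  shows "qf A v = e * vec_norm_sq v"
  using assms unfolding qf_def by (simp add: scalar_prod_conjugate_self)

lemma qf_hermitian_real:
  assumes "hermitian_mat n A" and "x \<in> carrier_vec n"
  shows "cnj (qf A x) = qf A x"
proof -
  have A: "A \<in> carrier_mat n n" "mat_adjoint A = A"
    using assms(1) by (auto simp: hermitian_mat_def)
  have "cnj (qf A x) = x \<bullet> conjugate (A *\<^sub>v x)"
    unfolding qf_def using conjugate_conjugate_sprod[of x n "A *\<^sub>v x"] A assms(2) by simp
  also have "\<dots> = conjugate (A *\<^sub>v x) \<bullet> x"
    using A assms(2) by (intro comm_scalar_prod[of _ n]) auto
  also have "\<dots> = qf A x"
    unfolding qf_def using A assms(2) by (simp add: adjoint_scalar_prod)
  finally show ?thesis .
qed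

lemma hermitian_eigenvalue_real:
  assumes A: "hermitian_mat n A" and e: "eigenvalue A e"
  shows "e = of_real (Re e)"
proof -
  have Ac: "A \<in> carrier_mat n n" using A by (simp add: hermitian_mat_def)
  obtain v where v: "v \<in> carrier_vec n" "v \<noteq> 0\<^sub>v n" "A *\<^sub>v v = e \<cdot>\<^sub>v v"
    using e Ac unfolding eigenvalue_def eigenvector_def by auto
  have "cnj e * vec_norm_sq v = e * vec_norm_sq v"
    using qf_hermitian_real[OF A v(1)] qf_eigenvector[OF Ac v(1,3)] by simp
  then have "cnj e = e" using vec_norm_sq_pos[OF v(1,2)] by simp
  then show ?thesis by (metis Reals_cnj_iff complex_is_Real_iff of_real_Re)
qed

lemma finite_real_eigenvalues:
  fixes A :: "complex mat"
  assumes "A \<in> carrier_mat n n"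
  shows "finite {\<mu> :: real. eigenvalue A (of_real \<mu>)}"
proof -
  have "{\<mu> :: real. eigenvalue A (of_real \<mu>)} = of_real -` spectrum A"
    unfolding spectrum_def by auto
  then show ?thesis
    using card_finite_spectrum(1)[OF assms] by (simp add: finite_vimageI inj_on_def)
qed

lemma hermitian_real_eigenvalue_exists:
  assumes A: "hermitian_mat n A" and n: "0 < n"
  shows "\<exists>\<mu>. eigenvalue A (of_real \<mu>)"
proof -
  have "A \<in> carrier_mat n n" using A by (simp add: hermitian_mat_def)
  then obtain e where "eigenvalue A e"
    using spectrum_non_empty[OF _ n] unfolding spectrum_def by auto
  then show ?thesis using hermitian_eigenvalue_real[OF A] by metis
qed

section \<open>The smallest eigenvalue and Rayleigh quotients\<close>

lemma norm_conjugate_scalar_prod_sq_le: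
  assumes "x \<in> carrier_vec n" and "y \<in> carrier_vec n"
  shows "(cmod (conjugate x \<bullet> y))\<^sup>2 \<le> vec_norm_sq x * vec_norm_sq y"
proof -
  have "conjugate x \<bullet> y = (\<Sum>a<n. cnj (x $ a) * y $ a)"
    using assms by (simp add: scalar_prod_def atLeast0LessThan)
  then have "cmod (conjugate x \<bullet> y) \<le> (\<Sum>a<n. cmod (x $ a) * cmod (y $ a))"
    using norm_sum[of "\<lambda>a. cnj (x $ a) * y $ a" "{..<n}"] by (simp add: norm_mult)
  then have "(cmod (conjugate x \<bullet> y))\<^sup>2 \<le> (\<Sum>a<n. cmod (x $ a) * cmod (y $ a))\<^sup>2"
    by (simp add: power_mono)
  also have "\<dots> \<le> vec_norm_sq x * vec_norm_sq y"
    using assms unfolding vec_norm_sq_def by (simp add: Cauchy_Schwarz_ineq_sum)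
  finally show ?thesis .
qed

lemma hermitian_mat_mult_self:
  assumes "hermitian_mat n M"
  shows "hermitian_mat n (M * M)"
  using assms mult_carrier_mat[of M n n M n]
  by (simp add: hermitian_mat_def mat_adjoint_mult[of M n n M n])

lemma qf_mult_self:
  assumes "hermitian_mat n M" and "x \<in> carrier_vec n"
  shows "qf (M * M) x = vec_norm_sq (M *\<^sub>v x)"
proof -
  have M: "M \<in> carrier_mat n n" "mat_adjoint M = M"
    using assms(1) by (auto simp: hermitian_mat_def)
  have "qf (M * M) x = conjugate x \<bullet> (mat_adjoint M *\<^sub>v (M *\<^sub>v x))"
    unfolding qf_def using M assms(2) by simp
  also have "\<dots> = conjugate (M *\<^sub>v x) \<bullet> (M *\<^sub>v x)"
    using M assms(2) by (simp add: adjoint_scalar_prod)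
  also have "\<dots> = vec_norm_sq (M *\<^sub>v x)"
    using M assms(2) by (simp add: scalar_prod_conjugate_self[of _ n])
  finally show ?thesis .
qed

lemma qf_square_le:
  assumes "hermitian_mat n M" and "x \<in> carrier_vec n"
  shows "(Re (qf M x))\<^sup>2 \<le> vec_norm_sq x * Re (qf (M * M) x)"
proof -
  have M: "M \<in> carrier_mat n n" using assms(1) by (simp add: hermitian_mat_def)
  have "(Re (qf M x))\<^sup>2 \<le> (cmod (qf M x))\<^sup>2"
    by (metis abs_Re_le_cmod abs_ge_zero power2_abs power_mono)
  also have "\<dots> \<le> vec_norm_sq x * vec_norm_sq (M *\<^sub>v x)"
    unfolding qf_def using M assms(2) by (intro norm_conjugate_scalar_prod_sq_le) auto
  finally show ?thesis using qf_mult_self[OF assms] by simp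
qed

lemma pow_mat_add:
  assumes "A \<in> carrier_mat n n"
  shows "A ^\<^sub>m (k + l) = A ^\<^sub>m k * A ^\<^sub>m l"
proof (induction l)
  case (Suc l)
  have "A ^\<^sub>m (k + Suc l) = A ^\<^sub>m k * A ^\<^sub>m l * A" using Suc by simp
  also have "\<dots> = A ^\<^sub>m k * (A ^\<^sub>m l * A)"
    using assms by (intro assoc_mult_mat[of _ n n _ n _ n]) auto
  finally show ?case by simp
qed (use assms in simp)

lemma hermitian_mat_pow_two_pow:
  assumes "hermitian_mat n G"
  shows "hermitian_mat n (G ^\<^sub>m 2 ^ k)"
proof (induction k)
  case 0
  then show ?case using assms by (simp add: hermitian_mat_def)
next
  case (Suc k)
  have "G ^\<^sub>m 2 ^ Suc k = G ^\<^sub>m 2 ^ k * G ^\<^sub>m 2 ^ k"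
    using assms pow_mat_add[of G n "2 ^ k" "2 ^ k"] by (simp add: hermitian_mat_def mult_2)
  then show ?case using hermitian_mat_mult_self[OF Suc] by simp
qed

lemma qf_pow_two_pow_ge:
  assumes G: "hermitian_mat n G" and x: "x \<in> carrier_vec n"
    and q: "0 \<le> q" "q * vec_norm_sq x \<le> Re (qf G x)"
  shows "q ^ 2 ^ k * vec_norm_sq x \<le> Re (qf (G ^\<^sub>m 2 ^ k) x)"
proof (induction k)
  case 0
  then show ?case using q by simp
next
  case (Suc k)
  define M where "M = G ^\<^sub>m 2 ^ k"
  have M: "hermitian_mat n M" unfolding M_def by (rule hermitian_mat_pow_two_pow[OF G])
  have GM: "G ^\<^sub>m 2 ^ Suc k = M * M"
    using G pow_mat_add[of G n "2 ^ k" "2 ^ k"] by (simp add: hermitian_mat_def M_def mult_2)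
  have MM: "0 \<le> Re (qf (M * M) x)" using qf_mult_self[OF M x] by (simp add: vec_norm_sq_nonneg)
  have "vec_norm_sq x * (q ^ 2 ^ Suc k * vec_norm_sq x) = (q ^ 2 ^ k * vec_norm_sq x)\<^sup>2"
    by (simp add: power2_eq_square power_mult_distrib power_add mult_2 ac_simps)
  also have "\<dots> \<le> (Re (qf M x))\<^sup>2"
    using Suc q vec_norm_sq_nonneg[of x] unfolding M_def by (intro power_mono) auto
  also have "\<dots> \<le> vec_norm_sq x * Re (qf (M * M) x)" by (rule qf_square_le[OF M x])
  finally have "vec_norm_sq x * (q ^ 2 ^ Suc k * vec_norm_sq x) \<le> vec_norm_sq x * Re (qf (M * M) x)" .
  then show ?case
    using MM vec_norm_sq_nonneg[of x] unfolding GM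
    by (cases "vec_norm_sq x = 0") (auto simp: mult_le_cancel_left)
qed

lemma qf_norm_bound:
  fixes M :: "complex mat"
  assumes "M \<in> carrier_mat n n" and "x \<in> carrier_vec n" and "norm_bound M C"
  shows "cmod (qf M x) \<le> C * (\<Sum>a<n. cmod (x $ a))\<^sup>2"
proof -
  have "cmod (qf M x) \<le> (\<Sum>a<n. \<Sum>b<n. cmod (cnj (x $ a) * M $$ (a, b) * x $ b))"
    unfolding qf_expand[OF assms(1,2)] by (intro order_trans[OF norm_sum] sum_mono norm_sum)
  also have "\<dots> \<le> (\<Sum>a<n. \<Sum>b<n. C * (cmod (x $ a) * cmod (x $ b)))"
  proof (intro sum_mono)
    fix a b assume "a \<in> {..<n}" "b \<in> {..<n}"
    then have "cmod (M $$ (a, b)) \<le> C" using assms(1,3) unfolding norm_bound_def by auto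
    then have "cmod (x $ a) * cmod (x $ b) * cmod (M $$ (a, b)) \<le> cmod (x $ a) * cmod (x $ b) * C"
      by (intro mult_left_mono) auto
    then show "cmod (cnj (x $ a) * M $$ (a, b) * x $ b) \<le> C * (cmod (x $ a) * cmod (x $ b))"
      by (simp add: norm_mult mult_ac)
  qed
  also have "\<dots> = C * (\<Sum>a<n. cmod (x $ a))\<^sup>2"
    unfolding power2_eq_square sum_product by (simp add: sum_distrib_left)
  finally show ?thesis .
qed

(* The powers of G stay bounded, whereas a Rayleigh quotient q > 1 would force
   x^* G^(2^k) x >= q^(2^k) |x|^2 by repeated Cauchy-Schwarz. *)
lemma hermitian_qf_le_if_spectral_radius_less_1:
  assumes G: "hermitian_mat n G" and x: "x \<in> carrier_vec n" and sr: "spectral_radius G < 1"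
  shows "Re (qf G x) \<le> vec_norm_sq x"
proof (rule ccontr)
  assume "\<not> ?thesis"
  then have gt: "vec_norm_sq x < Re (qf G x)" by simp
  have Gc: "G \<in> carrier_mat n n" using G by (simp add: hermitian_mat_def)
  have "x \<noteq> 0\<^sub>v n" using gt Gc vec_norm_sq_nonneg[of x] by (auto simp: qf_def)
  then have s: "0 < vec_norm_sq x" using vec_norm_sq_pos[OF x] by blast
  define q where "q = Re (qf G x) / vec_norm_sq x"
  have q: "1 < q" "q * vec_norm_sq x = Re (qf G x)" using gt s by (auto simp: q_def)
  obtain C where C: "\<And>k. norm_bound (G ^\<^sub>m k) C"
    using spectral_radius_jnf_norm_bound_less_1_upper_triangular[OF Gc sr] by blast
  define X where "X = (\<Sum>a<n. cmod (x $ a))\<^sup>2"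
  obtain k where k: "C * X / vec_norm_sq x < q ^ k" using real_arch_pow[OF q(1)] by blast
  have "q ^ k \<le> q ^ 2 ^ k" using q(1) by (intro power_increasing) (auto intro: less_imp_le less_exp)
  have "C * X < q ^ k * vec_norm_sq x" using k s by (simp add: pos_divide_less_eq)
  also have "\<dots> \<le> q ^ 2 ^ k * vec_norm_sq x"
    using \<open>q ^ k \<le> q ^ 2 ^ k\<close> s by (simp add: mult_right_mono)
  also have "\<dots> \<le> Re (qf (G ^\<^sub>m 2 ^ k) x)"
    using q by (intro qf_pow_two_pow_ge[OF G x]) auto
  also have "\<dots> \<le> cmod (qf (G ^\<^sub>m 2 ^ k) x)" by (rule complex_Re_le_cmod)
  also have "\<dots> \<le> C * X" unfolding X_def using Gc x C by (intro qf_norm_bound) auto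
  finally show False by simp
qed

definition scaled_shift :: "complex \<Rightarrow> complex \<Rightarrow> complex mat \<Rightarrow> complex mat" where
  "scaled_shift c t A = mat (dim_row A) (dim_row A) (\<lambda>(i, j). ((if i = j then c else 0) - A $$ (i, j)) / t)"

lemma scaled_shift_carrier: "A \<in> carrier_mat n n \<Longrightarrow> scaled_shift c t A \<in> carrier_mat n n"
  by (simp add: scaled_shift_def)

lemma scaled_shift_mult_vec_index:
  fixes A :: "complex mat"
  assumes "A \<in> carrier_mat n n" and "v \<in> carrier_vec n" and "a < n"
  shows "(scaled_shift c t A *\<^sub>v v) $ a = (c * v $ a - (A *\<^sub>v v) $ a) / t"
proof -
  have "(scaled_shift c t A *\<^sub>v v) $ a = (\<Sum>b<n. ((if a = b then c else 0) - A $$ (a, b)) * v $ b) / t"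
    using assms
    by (auto simp: scaled_shift_def scalar_prod_def atLeast0LessThan sum_divide_distrib intro!: sum.cong)
  also have "(\<Sum>b<n. ((if a = b then c else 0) - A $$ (a, b)) * v $ b)
      = (\<Sum>b<n. (if a = b then c * v $ b else 0) - A $$ (a, b) * v $ b)"
    by (rule sum.cong) (auto simp: algebra_simps)
  also have "\<dots> = c * v $ a - (A *\<^sub>v v) $ a"
    using assms by (simp add: sum_subtractf sum.delta scalar_prod_def atLeast0LessThan)
  finally show ?thesis .
qed

lemma hermitian_scaled_shift:
  assumes "hermitian_mat n A"
  shows "hermitian_mat n (scaled_shift (complex_of_real c) (complex_of_real t) A)"
  unfolding hermitian_mat_iff
proof (intro conjI allI impI)
  have A: "A \<in> carrier_mat n n" using assms by (simp add: hermitian_mat_def)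
  then show "scaled_shift (complex_of_real c) (complex_of_real t) A \<in> carrier_mat n n"
    by (rule scaled_shift_carrier)
  fix a b assume ab: "a < n" "b < n"
  have "cnj (A $$ (b, a)) = A $$ (a, b)" by (rule hermitian_mat_index[OF assms ab])
  then show "scaled_shift (complex_of_real c) (complex_of_real t) A $$ (a, b)
      = cnj (scaled_shift (complex_of_real c) (complex_of_real t) A $$ (b, a))"
    using A ab by (simp add: scaled_shift_def)
qed

lemma eigenvalue_scaled_shift:
  fixes A :: "complex mat"
  assumes A: "A \<in> carrier_mat n n" and t: "t \<noteq> 0" and e: "eigenvalue (scaled_shift c t A) e"
  shows "eigenvalue A (c - t * e)"
proof -
  have S: "scaled_shift c t A \<in> carrier_mat n n" by (rule scaled_shift_carrier[OF A])
  obtain v where v: "v \<in> carrier_vec n" "v \<noteq> 0\<^sub>v n" "scaled_shift c t A *\<^sub>v v = e \<cdot>\<^sub>v v"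
    using e S unfolding eigenvalue_def eigenvector_def by auto
  have "A *\<^sub>v v = (c - t * e) \<cdot>\<^sub>v v"
  proof (rule eq_vecI)
    fix a assume "a < dim_vec ((c - t * e) \<cdot>\<^sub>v v)"
    then have a: "a < n" using v by simp
    have "(c * v $ a - (A *\<^sub>v v) $ a) / t = e * v $ a"
      using scaled_shift_mult_vec_index[OF A v(1) a, of c t] v(3) a v(1) by simp
    then show "(A *\<^sub>v v) $ a = ((c - t * e) \<cdot>\<^sub>v v) $ a"
      using t a v(1) by (simp add: divide_eq_eq algebra_simps)
  qed (use v A in auto)
  then show ?thesis using v A unfolding eigenvalue_def eigenvector_def by auto
qed

lemma qf_scaled_shift:
  fixes A :: "complex mat"
  assumes A: "A \<in> carrier_mat n n" and x: "x \<in> carrier_vec n"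
  shows "qf (scaled_shift c t A) x = (c * vec_norm_sq x - qf A x) / t"
proof -
  have S: "scaled_shift c t A \<in> carrier_mat n n" by (rule scaled_shift_carrier[OF A])
  have "qf (scaled_shift c t A) x = (\<Sum>a<n. cnj (x $ a) * (scaled_shift c t A *\<^sub>v x) $ a)"
    unfolding qf_def using S x by (simp add: scalar_prod_def atLeast0LessThan)
  also have "\<dots> = (\<Sum>a<n. cnj (x $ a) * ((c * x $ a - (A *\<^sub>v x) $ a) / t))"
    using A x by (simp add: scaled_shift_mult_vec_index)
  also have "\<dots> = (c * (conjugate x \<bullet> x) - qf A x) / t"
    unfolding qf_def using A x
    by (simp add: scalar_prod_def atLeast0LessThan sum_subtractf sum_distrib_left
        right_diff_distrib mult_ac flip: sum_divide_distrib)
  finally show ?thesis using x by (simp add: scalar_prod_conjugate_self)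
qed

lemma spectral_radius_scaled_shift_less_1:
  assumes A: "hermitian_mat n A" and n: "0 < n" and t: "0 < t"
    and eig: "\<And>\<mu>. eigenvalue A (of_real \<mu>) \<Longrightarrow> c - t < \<mu> \<and> \<mu> \<le> c"
  shows "spectral_radius (scaled_shift (of_real c) (of_real t) A) < 1"
proof -
  have Ac: "A \<in> carrier_mat n n" using A by (simp add: hermitian_mat_def)
  let ?G = "scaled_shift (of_real c) (of_real t) A"
  have "cmod e < 1" if "eigenvalue ?G e" for e
  proof -
    have "eigenvalue A (of_real c - of_real t * e)"
      using eigenvalue_scaled_shift[OF Ac _ that] t by simp
    moreover obtain \<mu> where \<mu>: "of_real c - of_real t * e = of_real \<mu>"
      using hermitian_eigenvalue_real[OF A calculation] by blast
    ultimately have "c - t < \<mu>" "\<mu> \<le> c" using eig by auto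
    moreover have "e = of_real ((c - \<mu>) / t)" using \<mu> t by (simp add: field_simps)
    then have "cmod e = \<bar>(c - \<mu>) / t\<bar>" by (simp only: norm_of_real)
    ultimately show ?thesis using t by (simp add: divide_less_eq)
  qed
  then show ?thesis
    using spectral_radius_mem_max(1)[OF scaled_shift_carrier[OF Ac, of "of_real c" "of_real t"] n]
    by (auto simp: spectrum_def)
qed

(* No spectral theorem is needed: if every eigenvalue exceeded the Rayleigh quotient r of x, then
   G = (c I - A) / t, with c the largest eigenvalue and t = c - (mu_min + r) / 2, would have all
   its eigenvalues in [0, 1) but the Rayleigh quotient (c - r) / t > 1 at x. *)
lemma hermitian_eigenvalue_le_rayleigh:
  assumes A: "hermitian_mat n A" and x: "x \<in> carrier_vec n" "x \<noteq> 0\<^sub>v n"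
  shows "\<exists>\<mu>. eigenvalue A (of_real \<mu>) \<and> \<mu> * vec_norm_sq x \<le> Re (qf A x)"
proof (rule ccontr)
  assume below: "\<not> ?thesis"
  have Ac: "A \<in> carrier_mat n n" using A by (simp add: hermitian_mat_def)
  have s: "0 < vec_norm_sq x" by (rule vec_norm_sq_pos[OF x])
  have n: "0 < n" using x by (cases n) auto
  define E where "E = {\<mu> :: real. eigenvalue A (of_real \<mu>)}"
  have E: "finite E" "E \<noteq> {}"
    using finite_real_eigenvalues[OF Ac] hermitian_real_eigenvalue_exists[OF A n]
    by (auto simp: E_def)
  define r where "r = Re (qf A x) / vec_norm_sq x"
  have r: "r < Min E"
    using below Min_in[OF E] s by (auto simp: E_def r_def pos_divide_less_eq)
  define c where "c = Max E"
  define t where "t = c - (Min E + r) / 2"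
  have t: "c - Min E < t" "0 < t" using r Min_le[OF E(1) Max_in[OF E]] by (auto simp: t_def c_def)
  define G where "G = scaled_shift (of_real c) (of_real t) A"
  have "spectral_radius G < 1"
    unfolding G_def
  proof (rule spectral_radius_scaled_shift_less_1[OF A n t(2)])
    fix \<mu> assume "eigenvalue A (of_real \<mu>)"
    then have "Min E \<le> \<mu>" "\<mu> \<le> c" using E by (auto simp: E_def c_def)
    then show "c - t < \<mu> \<and> \<mu> \<le> c" using t by simp
  qed
  then have le: "Re (qf G x) \<le> vec_norm_sq x"
    using hermitian_qf_le_if_spectral_radius_less_1[OF _ x(1)] hermitian_scaled_shift[OF A]
    by (simp add: G_def)
  have eq: "Re (qf G x) = (c - r) / t * vec_norm_sq x"
    using s t unfolding G_def qf_scaled_shift[OF Ac x(1)]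
    by (simp add: r_def field_simps Re_divide_of_real)
  have "1 < (c - r) / t" using t by (simp add: t_def)
  then have "vec_norm_sq x < (c - r) / t * vec_norm_sq x"
    using mult_strict_right_mono[OF _ s] by fastforce
  with le eq show False by linarith
qed

lemma min_eig_le_rayleigh:
  assumes A: "hermitian_mat n A" and x: "x \<in> carrier_vec n" "x \<noteq> 0\<^sub>v n"
  shows "min_eig A * vec_norm_sq x \<le> Re (qf A x)"
proof -
  have Ac: "A \<in> carrier_mat n n" using A by (simp add: hermitian_mat_def)
  obtain \<mu> where \<mu>: "eigenvalue A (of_real \<mu>)" "\<mu> * vec_norm_sq x \<le> Re (qf A x)"
    using hermitian_eigenvalue_le_rayleigh[OF A x] by blast
  have "min_eig A \<le> \<mu>"
    unfolding min_eig_def using finite_real_eigenvalues[OF Ac] \<mu>(1) by (intro Min_le) auto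
  then have "min_eig A * vec_norm_sq x \<le> \<mu> * vec_norm_sq x"
    by (intro mult_right_mono vec_norm_sq_nonneg)
  with \<mu>(2) show ?thesis by linarith
qed

lemma min_eig_ge:
  assumes A: "hermitian_mat n A" and n: "0 < n"
    and lower: "\<And>x. x \<in> carrier_vec n \<Longrightarrow> l * vec_norm_sq x \<le> Re (qf A x)"
  shows "l \<le> min_eig A"
proof -
  have Ac: "A \<in> carrier_mat n n" using A by (simp add: hermitian_mat_def)
  define E where "E = {\<mu> :: real. eigenvalue A (of_real \<mu>)}"
  have E: "finite E" "E \<noteq> {}"
    using finite_real_eigenvalues[OF Ac] hermitian_real_eigenvalue_exists[OF A n]
    by (auto simp: E_def)
  then have "eigenvalue A (of_real (Min E))" using Min_in unfolding E_def by blast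
  then obtain v where v: "v \<in> carrier_vec n" "v \<noteq> 0\<^sub>v n" "A *\<^sub>v v = of_real (Min E) \<cdot>\<^sub>v v"
    using Ac unfolding eigenvalue_def eigenvector_def by auto
  have "l * vec_norm_sq v \<le> Min E * vec_norm_sq v"
    using lower[OF v(1)] qf_eigenvector[OF Ac v(1,3)] by simp
  then show ?thesis
    using vec_norm_sq_pos[OF v(1,2)] by (simp add: min_eig_def E_def)
qed

section \<open>Unitary matrices\<close>

definition unitary_mat :: "nat \<Rightarrow> complex mat \<Rightarrow> bool" where
  "unitary_mat n W \<longleftrightarrow> W \<in> carrier_mat n n \<and> mat_adjoint W * W = 1\<^sub>m n \<and> W * mat_adjoint W = 1\<^sub>m n"

lemma unitary_matI:
  assumes "W \<in> carrier_mat n n" and "W * mat_adjoint W = 1\<^sub>m n"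
  shows "unitary_mat n W"
  using assms mat_mult_left_right_inverse[of W n "mat_adjoint W"]
  by (simp add: unitary_mat_def)

lemma unitary_vec_norm_sq:
  assumes W: "unitary_mat n W" and x: "x \<in> carrier_vec n"
  shows "vec_norm_sq (W *\<^sub>v x) = vec_norm_sq x"
proof -
  have Wc: "W \<in> carrier_mat n n" and WW: "mat_adjoint W * W = 1\<^sub>m n"
    using W by (auto simp: unitary_mat_def)
  have "complex_of_real (vec_norm_sq (W *\<^sub>v x)) = conjugate (W *\<^sub>v x) \<bullet> (W *\<^sub>v x)"
    using Wc x by (simp add: scalar_prod_conjugate_self[of _ n])
  also have "\<dots> = conjugate x \<bullet> ((mat_adjoint W * W) *\<^sub>v x)"
    using Wc x by (simp add: adjoint_scalar_prod assoc_mult_mat_vec[of "mat_adjoint W" n n W n])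
  also have "\<dots> = complex_of_real (vec_norm_sq x)"
    using x by (simp add: WW scalar_prod_conjugate_self)
  finally show ?thesis by simp
qed

lemma unitary_sum_sq_coords:
  assumes "unitary_mat n W" and "x \<in> carrier_vec n"
  shows "(\<Sum>m<n. (cmod ((W *\<^sub>v x) $ m))\<^sup>2) = vec_norm_sq x"
proof -
  have "W \<in> carrier_mat n n" using assms(1) by (simp add: unitary_mat_def)
  then have "vec_norm_sq (W *\<^sub>v x) = (\<Sum>m<n. (cmod ((W *\<^sub>v x) $ m))\<^sup>2)"
    by (simp add: vec_norm_sq_def)
  then show ?thesis using unitary_vec_norm_sq[OF assms] by simp
qed

lemma unitary_weighted_sum_ge:
  assumes "unitary_mat n W" and "x \<in> carrier_vec n" and "\<And>m. m < n \<Longrightarrow> l \<le> w m"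
  shows "l * vec_norm_sq x \<le> (\<Sum>m<n. w m * (cmod ((W *\<^sub>v x) $ m))\<^sup>2)"
  unfolding unitary_sum_sq_coords[OF assms(1,2), symmetric] sum_distrib_left
  using assms(3) by (intro sum_mono mult_right_mono) auto

lemma unitary_weighted_sum_le:
  assumes "unitary_mat n W" and "x \<in> carrier_vec n" and "\<And>m. m < n \<Longrightarrow> w m \<le> h"
  shows "(\<Sum>m<n. w m * (cmod ((W *\<^sub>v x) $ m))\<^sup>2) \<le> h * vec_norm_sq x"
  unfolding unitary_sum_sq_coords[OF assms(1,2), symmetric] sum_distrib_left
  using assms(3) by (intro sum_mono mult_right_mono) auto

lemma unitary_test_vector:
  assumes W: "unitary_mat n W" and j: "j < n"
  defines "x \<equiv> complex_of_real (sqrt (real n)) \<cdot>\<^sub>v (mat_adjoint W *\<^sub>v unit_vec n j)"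
  shows "x \<in> carrier_vec n" and "vec_norm_sq x = real n"
    and "(\<Sum>m<n. w m * (cmod ((W *\<^sub>v x) $ m))\<^sup>2) = real n * w j"
proof -
  have Wc: "W \<in> carrier_mat n n" and WW: "W * mat_adjoint W = 1\<^sub>m n"
    using W by (auto simp: unitary_mat_def)
  have e: "mat_adjoint W *\<^sub>v unit_vec n j \<in> carrier_vec n"
    using Wc by (intro mult_mat_vec_carrier[of _ n n]) auto
  show x: "x \<in> carrier_vec n" unfolding x_def using e by simp
  have "W *\<^sub>v (mat_adjoint W *\<^sub>v unit_vec n j) = (W * mat_adjoint W) *\<^sub>v unit_vec n j"
    using Wc by (intro assoc_mult_mat_vec[symmetric, of W n n "mat_adjoint W" n]) auto
  then have Wx: "W *\<^sub>v x = complex_of_real (sqrt (real n)) \<cdot>\<^sub>v unit_vec n j"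
    unfolding x_def using Wc e by (simp add: mult_mat_vec WW)
  have coord: "(cmod ((W *\<^sub>v x) $ m))\<^sup>2 = (if m = j then real n else 0)" if "m < n" for m
    using that j unfolding Wx by (cases "m = j") (simp_all add: norm_mult)
  have "vec_norm_sq x = (\<Sum>m<n. (cmod ((W *\<^sub>v x) $ m))\<^sup>2)"
    by (rule unitary_sum_sq_coords[OF W x, symmetric])
  also have "\<dots> = (\<Sum>m<n. if m = j then real n else 0)"
    by (rule sum.cong) (simp_all add: coord)
  finally show "vec_norm_sq x = real n" using j by simp
  have "(\<Sum>m<n. w m * (cmod ((W *\<^sub>v x) $ m))\<^sup>2) = (\<Sum>m<n. if m = j then w m * real n else 0)"
    by (rule sum.cong) (simp_all add: coord)
  then show "(\<Sum>m<n. w m * (cmod ((W *\<^sub>v x) $ m))\<^sup>2) = real n * w j"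
    using j by simp
qed

lemma unitary_pair_weighted_sum_ge:
  assumes "unitary_mat n W" and "unitary_mat n W'" and "x \<in> carrier_vec n"
    and "\<And>m. m < n \<Longrightarrow> l \<le> w m" and "\<And>m. m < n \<Longrightarrow> l' \<le> w' m"
  shows "(l + l') * vec_norm_sq x
    \<le> (\<Sum>m<n. w m * (cmod ((W *\<^sub>v x) $ m))\<^sup>2) + (\<Sum>m<n. w' m * (cmod ((W' *\<^sub>v x) $ m))\<^sup>2)"
proof -
  have "l * vec_norm_sq x \<le> (\<Sum>m<n. w m * (cmod ((W *\<^sub>v x) $ m))\<^sup>2)"
    by (rule unitary_weighted_sum_ge[OF assms(1,3)]) (rule assms(4))
  moreover have "l' * vec_norm_sq x \<le> (\<Sum>m<n. w' m * (cmod ((W' *\<^sub>v x) $ m))\<^sup>2)"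
    by (rule unitary_weighted_sum_ge[OF assms(2,3)]) (rule assms(5))
  ultimately show ?thesis by (simp add: distrib_right)
qed

lemma unitary_pair_test_vector:
  assumes W: "unitary_mat n W" and W': "unitary_mat n W'" and j: "j < n"
    and h: "\<And>m. m < n \<Longrightarrow> w' m \<le> h"
  obtains x where "x \<in> carrier_vec n" and "vec_norm_sq x = real n"
    and "(\<Sum>m<n. w m * (cmod ((W *\<^sub>v x) $ m))\<^sup>2) + (\<Sum>m<n. w' m * (cmod ((W' *\<^sub>v x) $ m))\<^sup>2)
      \<le> real n * (w j + h)"
proof
  let ?x = "complex_of_real (sqrt (real n)) \<cdot>\<^sub>v (mat_adjoint W *\<^sub>v unit_vec n j)"
  show x: "?x \<in> carrier_vec n" and norm: "vec_norm_sq ?x = real n"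
    using unitary_test_vector(1,2)[OF W j] by simp_all
  have "(\<Sum>m<n. w' m * (cmod ((W' *\<^sub>v ?x) $ m))\<^sup>2) \<le> h * real n"
    using unitary_weighted_sum_le[OF W' x h] norm by simp
  then show "(\<Sum>m<n. w m * (cmod ((W *\<^sub>v ?x) $ m))\<^sup>2) + (\<Sum>m<n. w' m * (cmod ((W' *\<^sub>v ?x) $ m))\<^sup>2)
      \<le> real n * (w j + h)"
    using unitary_test_vector(3)[OF W j, of w] by (simp add: algebra_simps)
qed

section \<open>The matrices V and V-hat\<close>

lemma sum_roots_of_unity:
  fixes d :: int
  assumes N: "0 < N" and d: "\<bar>d\<bar> < int N"
  shows "(\<Sum>j<N. cis (2 * pi * real (Suc j) * of_int d / real N)) = (if d = 0 then of_nat N else 0)"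
proof (cases "d = 0")
  case False
  define z where "z = cis (2 * pi * of_int d / real N)"
  have zj: "cis (2 * pi * real (Suc j) * of_int d / real N) = z * z ^ j" for j
    unfolding z_def DeMoivre cis_mult using N by (intro arg_cong[where f = cis]) (simp add: field_simps)
  have "z ^ N = cis (2 * pi * of_int d)"
    unfolding z_def DeMoivre using N by (intro arg_cong[where f = cis]) (simp add: field_simps)
  then have zN: "z ^ N = 1" by (simp add: complex_eq_iff cos_int_2pin sin_int_2pin)
  have "z \<noteq> 1"
  proof
    assume "z = 1"
    then have "cos (2 * pi * of_int d / real N) = 1"
      unfolding z_def by (metis cis.sel(1) one_complex.sel(1))
    then obtain k :: int where "2 * pi * of_int d / real N = of_int k * 2 * pi"
      unfolding cos_one_2pi_int by auto
    then have "real_of_int d = of_int k * real N" using N by (simp add: field_simps)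
    then have "d = k * int N" by (metis of_int_eq_iff of_int_mult of_int_of_nat_eq)
    then show False using d False by (cases "k = 0") (auto simp: abs_mult)
  qed
  then show ?thesis
    unfolding zj using False zN by (simp add: sum_gp_strict flip: sum_distrib_left)
qed simp

lemma Vmat_carrier [simp]: "Vmat N \<in> carrier_mat N N"
  and Vhat_carrier [simp]: "Vhat N \<in> carrier_mat N N"
  by (simp_all add: Vmat_def Vhat_def)

lemma Vmat_index:
  assumes "a < N" and "b < N"
  shows "Vmat N $$ (a, b) = cis (- 2 * pi * (real (Suc a) * real (Suc b) / real N)) / sqrt (real N)"
proof -
  have "exp (- 2 * pi * \<i> * complex_of_real (real (Suc a) * real (Suc b) / real N))
      = cis (- 2 * pi * (real (Suc a) * real (Suc b) / real N))"
    unfolding cis_conv_exp by (simp add: algebra_simps)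
  then show ?thesis using assms by (simp add: Vmat_def Let_def)
qed

lemma Vhat_index:
  assumes "a < N" and "b < N"
  shows "Vhat N $$ (a, b) = Vmat N $$ (a, b) * cis (- pi * real (Suc b) / real N)"
proof -
  have "exp (- 2 * pi * \<i> * complex_of_real (real (Suc b) * (real (Suc a) / real N + 1 / (2 * real N))))
      = cis (- 2 * pi * (real (Suc b) * (real (Suc a) / real N + 1 / (2 * real N))))"
    unfolding cis_conv_exp by (simp add: algebra_simps)
  also have "\<dots> = cis (- 2 * pi * (real (Suc a) * real (Suc b) / real N)) * cis (- pi * real (Suc b) / real N)"
    unfolding cis_mult using assms by (intro arg_cong[where f = cis]) (simp add: field_simps)
  finally show ?thesis using assms by (simp add: Vhat_def Vmat_index Let_def)
qed

lemma Vmat_mult_adjoint: "Vmat N * mat_adjoint (Vmat N) = 1\<^sub>m N"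
proof (rule eq_matI)
  fix a a' assume "a < dim_row (1\<^sub>m N)" "a' < dim_col (1\<^sub>m N)"
  then have a: "a < N" "a' < N" by auto
  have "(Vmat N * mat_adjoint (Vmat N)) $$ (a, a')
      = (\<Sum>b<N. cis (2 * pi * real (Suc b) * of_int (int a' - int a) / real N)) / of_nat N"
  proof -
    have "Vmat N $$ (a, b) * cnj (Vmat N $$ (a', b))
        = cis (2 * pi * real (Suc b) * of_int (int a' - int a) / real N) / of_nat N" if "b < N" for b
    proof -
      have "Vmat N $$ (a, b) * cnj (Vmat N $$ (a', b))
          = cis (- 2 * pi * (real (Suc a) * real (Suc b) / real N))
            * cis (2 * pi * (real (Suc a') * real (Suc b) / real N))
            / (of_real (sqrt (real N)) * of_real (sqrt (real N)))"
        using a that by (simp add: Vmat_index cis_cnj)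
      also have "\<dots> = cis (2 * pi * real (Suc b) * of_int (int a' - int a) / real N) / of_nat N"
        unfolding cis_mult of_real_mult[symmetric] using a
        by (intro arg_cong2[where f = "(/)"] arg_cong[where f = cis]) (auto simp: field_simps)
      finally show ?thesis .
    qed
    then show ?thesis
      using a by (simp add: scalar_prod_def atLeast0LessThan Vmat_def sum_divide_distrib)
  qed
  also have "\<dots> = 1\<^sub>m N $$ (a, a')"
    using a sum_roots_of_unity[of N "int a' - int a"] by auto
  finally show "(Vmat N * mat_adjoint (Vmat N)) $$ (a, a') = 1\<^sub>m N $$ (a, a')" .
qed (simp_all add: Vmat_def)

(* V-hat is V with its b-th column scaled by the unimodular factor cis (- pi (b + 1) / N),
   which cancels in V-hat V-hat^*. *)
lemma Vhat_mult_adjoint: "Vhat N * mat_adjoint (Vhat N) = 1\<^sub>m N"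
proof -
  have "Vhat N $$ (a, b) * cnj (Vhat N $$ (a', b)) = Vmat N $$ (a, b) * cnj (Vmat N $$ (a', b))"
    if "a < N" "a' < N" "b < N" for a a' b
  proof -
    define u where "u = cis (- pi * real (Suc b) / real N)"
    have "Vhat N $$ (a, b) * cnj (Vhat N $$ (a', b))
        = Vmat N $$ (a, b) * cnj (Vmat N $$ (a', b)) * (u * cnj u)"
      using that by (simp add: Vhat_index u_def mult_ac)
    moreover have "u * cnj u = 1" by (simp add: u_def cis_cnj cis_mult)
    ultimately show ?thesis by simp
  qed
  then have "Vhat N * mat_adjoint (Vhat N) = Vmat N * mat_adjoint (Vmat N)"
    by (intro eq_matI) (auto simp: Vhat_def Vmat_def scalar_prod_def intro!: sum.cong)
  then show ?thesis by (simp add: Vmat_mult_adjoint)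
qed

lemma unitary_Vmat: "unitary_mat N (Vmat N)"
  by (rule unitary_matI[OF Vmat_carrier Vmat_mult_adjoint])

lemma unitary_Vhat: "unitary_mat N (Vhat N)"
  by (rule unitary_matI[OF Vhat_carrier Vhat_mult_adjoint])

section \<open>The interference matrix\<close>

lemma qf_unit_diag:
  assumes y: "y \<in> carrier_vec n" and m: "m \<in> {1..n}"
  shows "qf (mat n n (\<lambda>(a, b). if a = b \<and> a + 1 = m then complex_of_real c else 0)) y
    = complex_of_real (c * (cmod (y $ (m - 1)))\<^sup>2)"
proof -
  define k where "k = m - 1"
  have k: "k < n" "m = k + 1" using m by (auto simp: k_def)
  define D where "D = mat n n (\<lambda>(a, b). if a = b \<and> a + 1 = m then complex_of_real c else 0)"
  have "qf D y = (\<Sum>a<n. \<Sum>b<n. cnj (y $ a) * D $$ (a, b) * y $ b)"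
    by (rule qf_expand[OF _ y]) (simp add: D_def)
  also have "\<dots> = (\<Sum>a<n. \<Sum>b<n. if b = k then if a = k then cnj (y $ a) * c * y $ b else 0 else 0)"
    by (intro sum.cong refl) (auto simp: D_def k)
  also have "\<dots> = cnj (y $ k) * c * y $ k"
    using k(1) by simp
  also have "\<dots> = complex_of_real (c * (cmod (y $ k))\<^sup>2)"
    by (simp add: complex_norm_square mult_ac del: of_real_power)
  finally show ?thesis by (simp only: D_def k_def)
qed

lemma hermitian_unit_diag:
  "hermitian_mat n (mat n n (\<lambda>(a, b). if a = b \<and> a + 1 = m then complex_of_real c else 0))"
  by (auto simp: hermitian_mat_iff)

lemma Qmat_carrier: "Qmat N m \<in> carrier_mat N N"
  and Qhat_carrier: "Qhat N m \<in> carrier_mat N N"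
  by (auto simp: Qmat_def Qhat_def Vmat_def Vhat_def Cmat_def Chatmat_def mult_carrier_mat)

lemma hermitian_Qmat: "hermitian_mat N (Qmat N m)"
  and hermitian_Qhat: "hermitian_mat N (Qhat N m)"
  unfolding Qmat_def Qhat_def Cmat_def Chatmat_def
  by (intro hermitian_adjoint_congruence hermitian_unit_diag Vmat_carrier Vhat_carrier)+

lemma qf_Qmat:
  assumes "m \<in> {1..N}" and "x \<in> carrier_vec N"
  shows "qf (Qmat N m) x = complex_of_real (cval N m * (cmod ((Vmat N *\<^sub>v x) $ (m - 1)))\<^sup>2)"
proof -
  have "qf (Qmat N m) x = qf (Cmat N m) (Vmat N *\<^sub>v x)"
    unfolding Qmat_def by (rule qf_adjoint_mult[OF Vmat_carrier _ assms(2)]) (simp add: Cmat_def)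
  also have "\<dots> = complex_of_real (cval N m * (cmod ((Vmat N *\<^sub>v x) $ (m - 1)))\<^sup>2)"
    unfolding Cmat_def by (rule qf_unit_diag[OF mult_mat_vec_carrier[OF Vmat_carrier assms(2)] assms(1)])
  finally show ?thesis .
qed

lemma qf_Qhat:
  assumes "m \<in> {1..N}" and "x \<in> carrier_vec N"
  shows "qf (Qhat N m) x = complex_of_real (chat N m * (cmod ((Vhat N *\<^sub>v x) $ (m - 1)))\<^sup>2)"
proof -
  have "qf (Qhat N m) x = qf (Chatmat N m) (Vhat N *\<^sub>v x)"
    unfolding Qhat_def by (rule qf_adjoint_mult[OF Vhat_carrier _ assms(2)]) (simp add: Chatmat_def)
  also have "\<dots> = complex_of_real (chat N m * (cmod ((Vhat N *\<^sub>v x) $ (m - 1)))\<^sup>2)"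
    unfolding Chatmat_def by (rule qf_unit_diag[OF mult_mat_vec_carrier[OF Vhat_carrier assms(2)] assms(1)])
  finally show ?thesis .
qed

lemma cval_nonneg: "0 \<le> cval N m"
proof -
  have "0 \<le> 1 + 1/2 * cos (2 * pi * (real m / real N))"
    using cos_ge_minus_one[of "2 * pi * (real m / real N)"] by linarith
  then show ?thesis unfolding cval_def by simp
qed

lemma chat_nonneg: "0 \<le> chat N m"
proof -
  have "0 \<le> 1 + 1/2 * cos (2 * pi * (real m / real N + 1 / (2 * real N)))"
    using cos_ge_minus_one[of "2 * pi * (real m / real N + 1 / (2 * real N))"] by linarith
  then show ?thesis unfolding chat_def by simp
qed

lemma lam_nonneg:
  assumes "\<And>k. k \<in> {1..K} - {i} \<Longrightarrow> s k \<in> carrier_vec N" and "m \<in> {1..N}"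
  shows "0 \<le> lam N K i s m"
  unfolding lam_def using assms
  by (intro mult_nonneg_nonneg sum_nonneg) (auto simp: qf_Qmat cval_nonneg)

lemma lamhat_nonneg:
  assumes "\<And>k. k \<in> {1..K} - {i} \<Longrightarrow> s k \<in> carrier_vec N" and "m \<in> {1..N}"
  shows "0 \<le> lamhat N K i s m"
  unfolding lamhat_def using assms
  by (intro mult_nonneg_nonneg sum_nonneg) (auto simp: qf_Qhat chat_nonneg)

lemma qf_Sigma_i:
  assumes x: "x \<in> carrier_vec N"
  shows "qf (Sigma_i N K i s) x = (\<Sum>k\<in>{1..K} - {i}. \<Sum>m\<in>{1..N}.
      qf (Qmat N m) (s k) * qf (Qmat N m) x + qf (Qhat N m) (s k) * qf (Qhat N m) x)"
proof -
  have "qf (Sigma_i N K i s) x = (\<Sum>k\<in>{1..K} - {i}. \<Sum>m\<in>{1..N}. qf (mat N N (\<lambda>(a, b).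
      qf (Qmat N m) (s k) * Qmat N m $$ (a, b) + qf (Qhat N m) (s k) * Qhat N m $$ (a, b))) x)"
    unfolding Sigma_i_def qf_mat_sum[OF finite_Diff[OF finite_atLeastAtMost] x]
    by (intro sum.cong refl qf_mat_sum[OF finite_atLeastAtMost x])
  also have "\<dots> = (\<Sum>k\<in>{1..K} - {i}. \<Sum>m\<in>{1..N}.
      qf (Qmat N m) (s k) * qf (Qmat N m) x + qf (Qhat N m) (s k) * qf (Qhat N m) x)"
    by (intro sum.cong refl qf_mat_lincomb Qmat_carrier Qhat_carrier x)
  finally show ?thesis .
qed

lemma hermitian_Sigma_i:
  assumes "\<And>k. k \<in> {1..K} - {i} \<Longrightarrow> s k \<in> carrier_vec N"
  shows "hermitian_mat N (Sigma_i N K i s)"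
proof -
  have Q: "cnj (Qmat N m $$ (b, a)) = Qmat N m $$ (a, b)" "cnj (Qhat N m $$ (b, a)) = Qhat N m $$ (a, b)"
    if "a < N" "b < N" for a b m
    using that by (simp_all add: hermitian_mat_index[OF hermitian_Qmat] hermitian_mat_index[OF hermitian_Qhat])
  have q: "cnj (qf (Qmat N m) (s k)) = qf (Qmat N m) (s k)" "cnj (qf (Qhat N m) (s k)) = qf (Qhat N m) (s k)"
    if "k \<in> {1..K} - {i}" for k m
    using that assms by (auto intro: qf_hermitian_real hermitian_Qmat hermitian_Qhat)
  show ?thesis
    unfolding hermitian_mat_iff by (simp add: Sigma_i_def Q q)
qed

lemma sum_Sm_eq_Re_qf_Sigma_i:
  assumes "x \<in> carrier_vec N"
  shows "(\<Sum>k\<in>{1..K} - {i}. \<Sum>m\<in>{1..N}. Sm N m x (s k)) = Re (qf (Sigma_i N K i s) x)"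
  using assms by (simp add: qf_Sigma_i Sm_def mult.commute)

lemma Re_qf_Sigma_i:
  assumes x: "x \<in> carrier_vec N"
  shows "Re (qf (Sigma_i N K i s) x)
    = (\<Sum>m<N. lam N K i s (Suc m) * (cmod ((Vmat N *\<^sub>v x) $ m))\<^sup>2)
    + (\<Sum>m<N. lamhat N K i s (Suc m) * (cmod ((Vhat N *\<^sub>v x) $ m))\<^sup>2)"
proof -
  let ?v = "\<lambda>m. (cmod ((Vmat N *\<^sub>v x) $ (m - 1)))\<^sup>2"
  let ?w = "\<lambda>m. (cmod ((Vhat N *\<^sub>v x) $ (m - 1)))\<^sup>2"
  have "Re (qf (Sigma_i N K i s) x) = (\<Sum>k\<in>{1..K} - {i}. \<Sum>m\<in>{1..N}.
      Re (qf (Qmat N m) (s k)) * (cval N m * ?v m) + Re (qf (Qhat N m) (s k)) * (chat N m * ?w m))"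
    unfolding qf_Sigma_i[OF x] Re_sum by (intro sum.cong refl) (simp add: qf_Qmat qf_Qhat x)
  also have "\<dots> = (\<Sum>m\<in>{1..N}. lam N K i s m * ?v m + lamhat N K i s m * ?w m)"
    unfolding lam_def lamhat_def
    by (subst sum.swap, intro sum.cong refl)
      (simp add: sum.distrib sum_distrib_left sum_distrib_right mult_ac)
  also have "\<dots> = (\<Sum>m<N. lam N K i s (Suc m) * (cmod ((Vmat N *\<^sub>v x) $ m))\<^sup>2
      + lamhat N K i s (Suc m) * (cmod ((Vhat N *\<^sub>v x) $ m))\<^sup>2)"
    unfolding One_nat_def sum.atLeast1_atMost_eq by simp
  finally show ?thesis by (simp add: sum.distrib)
qed

lemma Sigma_i_rayleigh_lower:
  assumes "x \<in> carrier_vec N"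
  shows "(Min (lam N K i s ` {1..N}) + Min (lamhat N K i s ` {1..N})) * vec_norm_sq x
    \<le> Re (qf (Sigma_i N K i s) x)"
  unfolding Re_qf_Sigma_i[OF assms]
  by (rule unitary_pair_weighted_sum_ge[OF unitary_Vmat unitary_Vhat assms]) auto

lemma Sigma_i_rayleigh_upper:
  assumes N: "0 < N"
  obtains x where "x \<in> carrier_vec N" and "vec_norm_sq x = real N"
    and "Re (qf (Sigma_i N K i s) x) \<le> real N * min
      (Min (lam N K i s ` {1..N}) + Max (lamhat N K i s ` {1..N}))
      (Max (lam N K i s ` {1..N}) + Min (lamhat N K i s ` {1..N}))"
proof -
  let ?l = "lam N K i s" and ?h = "lamhat N K i s"
  have ne: "{1..N} \<noteq> {}" using N by simp
  have lmax: "?l (Suc m) \<le> Max (?l ` {1..N})" and hmax: "?h (Suc m) \<le> Max (?h ` {1..N})"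
    if "m < N" for m
    using that by (auto intro: Max_ge)
  have "Min (?l ` {1..N}) \<in> ?l ` {1..N}" using ne by (intro Min_in) auto
  then obtain j where "j \<in> {1..N}" "?l j = Min (?l ` {1..N})" by (metis imageE)
  then have j: "j - 1 < N" "?l (Suc (j - 1)) = Min (?l ` {1..N})" by auto
  have "Min (?h ` {1..N}) \<in> ?h ` {1..N}" using ne by (intro Min_in) auto
  then obtain j' where "j' \<in> {1..N}" "?h j' = Min (?h ` {1..N})" by (metis imageE)
  then have j': "j' - 1 < N" "?h (Suc (j' - 1)) = Min (?h ` {1..N})" by auto
  obtain x where x: "x \<in> carrier_vec N" "vec_norm_sq x = real N"
    and x_le: "(\<Sum>m<N. ?l (Suc m) * (cmod ((Vmat N *\<^sub>v x) $ m))\<^sup>2)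
      + (\<Sum>m<N. ?h (Suc m) * (cmod ((Vhat N *\<^sub>v x) $ m))\<^sup>2)
      \<le> real N * (?l (Suc (j - 1)) + Max (?h ` {1..N}))"
    by (rule unitary_pair_test_vector[where w = "\<lambda>m. ?l (Suc m)", OF unitary_Vmat unitary_Vhat j(1) hmax])
  obtain x' where x': "x' \<in> carrier_vec N" "vec_norm_sq x' = real N"
    and x'_le: "(\<Sum>m<N. ?h (Suc m) * (cmod ((Vhat N *\<^sub>v x') $ m))\<^sup>2)
      + (\<Sum>m<N. ?l (Suc m) * (cmod ((Vmat N *\<^sub>v x') $ m))\<^sup>2)
      \<le> real N * (?h (Suc (j' - 1)) + Max (?l ` {1..N}))"
    by (rule unitary_pair_test_vector[where w = "\<lambda>m. ?h (Suc m)", OF unitary_Vhat unitary_Vmat j'(1) lmax])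
  show ?thesis
  proof (cases "Min (?l ` {1..N}) + Max (?h ` {1..N}) \<le> Max (?l ` {1..N}) + Min (?h ` {1..N})")
    case True
    then show ?thesis using that[OF x] x_le j(2) by (simp add: Re_qf_Sigma_i[OF x(1)])
  next
    case False
    then show ?thesis using that[OF x'] x'_le j'(2) by (simp add: Re_qf_Sigma_i[OF x'(1)] add.commute)
  qed
qed

lemma min_eig_Sigma_i_bounds:
  assumes N: "0 < N" and s: "\<And>k. k \<in> {1..K} - {i} \<Longrightarrow> s k \<in> carrier_vec N"
  shows "Min (lam N K i s ` {1..N}) + Min (lamhat N K i s ` {1..N}) \<le> min_eig (Sigma_i N K i s)"
    and "min_eig (Sigma_i N K i s) \<le> min
      (Min (lam N K i s ` {1..N}) + Max (lamhat N K i s ` {1..N}))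
      (Max (lam N K i s ` {1..N}) + Min (lamhat N K i s ` {1..N}))"
      (is "_ \<le> ?\<gamma>")
proof -
  have H: "hermitian_mat N (Sigma_i N K i s)" by (rule hermitian_Sigma_i[OF s])
  show "Min (lam N K i s ` {1..N}) + Min (lamhat N K i s ` {1..N}) \<le> min_eig (Sigma_i N K i s)"
    by (rule min_eig_ge[OF H N Sigma_i_rayleigh_lower])
  obtain x where x: "x \<in> carrier_vec N" "vec_norm_sq x = real N"
    and x_le: "Re (qf (Sigma_i N K i s) x) \<le> real N * ?\<gamma>"
    by (rule Sigma_i_rayleigh_upper[OF N])
  have "x \<noteq> 0\<^sub>v N" using x(2) N by (auto simp: vec_norm_sq_def)
  then have "min_eig (Sigma_i N K i s) * real N \<le> ?\<gamma> * real N"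
    using min_eig_le_rayleigh[OF H x(1)] x(2) x_le by (simp add: mult.commute)
  then show "min_eig (Sigma_i N K i s) \<le> ?\<gamma>" using N by simp
qed

section \<open>Bounds on the optimal SINR\<close>

lemma SUP_powr_neg_half_bounds:
  fixes f :: "'a \<Rightarrow> real"
  assumes c: "0 < c" and l: "0 \<le> l" and lower: "\<And>x. x \<in> S \<Longrightarrow> l \<le> f x"
    and x0: "x0 \<in> S" and upper: "f x0 \<le> h"
  shows "(h + c) powr (-1/2) \<le> (SUP x\<in>S. (f x + c) powr (-1/2))"
    and "(SUP x\<in>S. (f x + c) powr (-1/2)) \<le> (l + c) powr (-1/2)"
proof -
  have bound: "(f x + c) powr (-1/2) \<le> (l + c) powr (-1/2)" if "x \<in> S" for x
    using lower[OF that] c l by (intro powr_mono2') auto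
  then have "bdd_above ((\<lambda>x. (f x + c) powr (-1/2)) ` S)" by (intro bdd_aboveI2)
  moreover have "(h + c) powr (-1/2) \<le> (f x0 + c) powr (-1/2)"
    using lower[OF x0] upper c l by (intro powr_mono2') auto
  ultimately show "(h + c) powr (-1/2) \<le> (SUP x\<in>S. (f x + c) powr (-1/2))"
    using x0 by (intro cSUP_upper2)
  show "(SUP x\<in>S. (f x + c) powr (-1/2)) \<le> (l + c) powr (-1/2)"
    using x0 bound by (intro cSUP_least) auto
qed

lemma SINR_star_eq_SUP:
  "SINR_star N K i s N0 P T = (SUP x\<in>{x \<in> carrier_vec N. vec_norm_sq x = real N}.
    (Re (qf (Sigma_i N K i s) x) / (6 * real N ^ 2) + N0 / (2 * P * T)) powr (-1/2))"
proof -
  have "{x \<in> carrier_vec N. (\<Sum>j<N. (cmod (x $ j))\<^sup>2) = real N}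
      = {x \<in> carrier_vec N. vec_norm_sq x = real N}"
    by (auto simp: vec_norm_sq_def)
  moreover have "(1 / (6 * real N ^ 2) * (\<Sum>k\<in>{1..K} - {i}. \<Sum>m\<in>{1..N}. Sm N m x (s k))
        + N0 / (2 * P * T)) powr (-1/2)
      = (Re (qf (Sigma_i N K i s) x) / (6 * real N ^ 2) + N0 / (2 * P * T)) powr (-1/2)"
    if "x \<in> carrier_vec N" for x
    by (simp only: sum_Sm_eq_Re_qf_Sigma_i[OF that]) simp
  ultimately show ?thesis unfolding SINR_star_def by (intro SUP_cong) blast+
qed

lemma SINR_star_bounds:
  assumes N: "0 < N" and c0: "0 < N0 / (2 * P * T)"
    and s: "\<And>k. k \<in> {1..K} - {i} \<Longrightarrow> s k \<in> carrier_vec N"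
  defines "l \<equiv> Min (lam N K i s ` {1..N}) + Min (lamhat N K i s ` {1..N})"
    and "\<gamma> \<equiv> min (Min (lam N K i s ` {1..N}) + Max (lamhat N K i s ` {1..N}))
      (Max (lam N K i s ` {1..N}) + Min (lamhat N K i s ` {1..N}))"
  shows "(\<gamma> / (6 * real N) + N0 / (2 * P * T)) powr (-1/2) \<le> SINR_star N K i s N0 P T"
    and "SINR_star N K i s N0 P T \<le> (1 / (6 * real N) * l + N0 / (2 * P * T)) powr (-1/2)"
proof -
  define S where "S = {x \<in> carrier_vec N. vec_norm_sq x = real N}"
  define f where "f x = Re (qf (Sigma_i N K i s) x) / (6 * real N ^ 2)" for x
  have "0 \<le> l" using N lam_nonneg[OF s] lamhat_nonneg[OF s] by (simp add: l_def)
  then have l: "0 \<le> 1 / (6 * real N) * l" by simp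
  have f_ge: "1 / (6 * real N) * l \<le> f x" if "x \<in> S" for x
  proof -
    have "1 / (6 * real N) * l = l * vec_norm_sq x / (6 * real N ^ 2)"
      using N that by (simp add: S_def power2_eq_square)
    also have "\<dots> \<le> f x"
    proof -
      have "l * vec_norm_sq x \<le> Re (qf (Sigma_i N K i s) x)"
        unfolding l_def using that by (intro Sigma_i_rayleigh_lower) (simp add: S_def)
      then show ?thesis unfolding f_def by (intro divide_right_mono) auto
    qed
    finally show ?thesis .
  qed
  obtain x where x: "x \<in> carrier_vec N" "vec_norm_sq x = real N"
    and x_le: "Re (qf (Sigma_i N K i s) x) \<le> real N * \<gamma>"
    unfolding \<gamma>_def by (rule Sigma_i_rayleigh_upper[OF N])
  have "f x \<le> \<gamma> / (6 * real N)"
    using x_le N by (simp add: f_def power2_eq_square field_simps)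
  moreover have "x \<in> S" using x by (simp add: S_def)
  ultimately have "(\<gamma> / (6 * real N) + N0 / (2 * P * T)) powr (-1/2)
      \<le> (SUP x\<in>S. (f x + N0 / (2 * P * T)) powr (-1/2))"
    and "(SUP x\<in>S. (f x + N0 / (2 * P * T)) powr (-1/2))
      \<le> (1 / (6 * real N) * l + N0 / (2 * P * T)) powr (-1/2)"
    using SUP_powr_neg_half_bounds[where f = f, OF c0 l f_ge] by blast+
  then show "(\<gamma> / (6 * real N) + N0 / (2 * P * T)) powr (-1/2) \<le> SINR_star N K i s N0 P T"
    and "SINR_star N K i s N0 P T \<le> (1 / (6 * real N) * l + N0 / (2 * P * T)) powr (-1/2)"
    unfolding SINR_star_eq_SUP S_def f_def by simp_all
qed

theorem mainTheorem2:
  fixes N K i :: nat and N0 P T :: real and s :: "nat \<Rightarrow> complex vec"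
  assumes "N \<ge> 2" and "K \<ge> 2" and "N0 > 0" and "P > 0" and "T > 0"
    and "i \<in> {1..K}"
    and "\<And>k. k \<in> {1..K} - {i} \<Longrightarrow> s k \<in> carrier_vec N"
  defines "lmin \<equiv> Min (lam N K i s ` {1..N})"
    and "lmax \<equiv> Max (lam N K i s ` {1..N})"
    and "hmin \<equiv> Min (lamhat N K i s ` {1..N})"
    and "hmax \<equiv> Max (lamhat N K i s ` {1..N})"
    and "\<gamma> \<equiv> min (Min (lam N K i s ` {1..N}) + Max (lamhat N K i s ` {1..N})) (Max (lam N K i s ` {1..N}) + Min (lamhat N K i s ` {1..N}))"
  shows "lmin + hmin \<le> min_eig (Sigma_i N K i s)
      \<and> min_eig (Sigma_i N K i s) \<le> \<gamma>
      \<and> (\<gamma> / (6 * real N) + N0 / (2 * P * T)) powr (-1/2) \<le> SINR_star N K i s N0 P T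
      \<and> SINR_star N K i s N0 P T \<le> (1 / (6 * real N) * (lmin + hmin) + N0 / (2 * P * T)) powr (-1/2)"
proof -
  have N: "0 < N" using assms(1) by simp
  have c0: "0 < N0 / (2 * P * T)" using assms(3-5) by simp
  show ?thesis
    using min_eig_Sigma_i_bounds[where K = K and i = i and s = s, OF N assms(7)]
      SINR_star_bounds[where K = K and i = i and s = s, OF N c0 assms(7)]
    unfolding lmin_def hmin_def \<gamma>_def by blast
qed

end
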